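(* For every integer $g\ge 0$ let ${\bf D}_g(z)=\sum_{n\ge 0}{\bf d}_g(n)z^n$ be the generating function of $g$-structures and ${\bf D}^*_g(z)=\sum_{n\ge 1}{\bf d}^*_g(n)z^n$ the generating function of irreducible $g$-structures, where $n$ counts vertices. Then $$ {\bf D}^*_0(z) = 1-\frac{1}{{\bf D}_0(z)}, $$ and for every $g\ge 1$ $$ {\bf D}^*_g(z) = -\frac{({\bf D}^*_0(z)-1){\bf D}_g(z)+\sum_{g_1=1}^{g-1}{\bf D}^*_{g_1}(z){\bf D}_{g-g_1}(z)}{{\bf D}_0(z)}. $$
   Context: A diagram over $[n]=\{1,\dots,n\}$ ($n\ge 0$) consists of the vertices $1,\dots,n$ placed in order on a horizontal line (the backbone) together with a set of arcs $(i,j)$, $1\le i<j\le n$, drawn in the upper half-plane, such that each vertex lies in at most one arc. The genus of a diagram is defined as follows. Let $k$ be the number of arcs and list the $2k$ arc endpoints in increasing order as $1,\dots,2k$. Let $\sigma$ be the fixed-point-free involution pairing the two endpoints of each arc, let $\gamma=(1\,2\,\cdots\,2k)$ be the cyclic shift, and let $r$ be the number of cycles of $\gamma\circ\sigma$. The genus $g$ is given by $2-2g=1-k+r$ (the diagram with no arcs has genus $0$). A $g$-structure is a diagram of genus $g$ having no arc of the form $(i,i+1)$. A diagram over $[n]$ with $n\ge1$ is irreducible if there is no $k$ with $1\le k<n$ such that no arc $(i,j)$ satisfies $i\le k<j$, i.e. it cannot be split into two by cutting the backbone without cutting an arc. ${\bf d}_g(n)$ is the number of $g$-structures over $[n]$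 (so ${\bf d}_0(0)=1$ for the empty structure) and ${\bf d}^*_g(n)$ is the number of irreducible $g$-structures over $[n]$, $n\ge 1$. All generating functions are formal power series. *)

theory Defs
  imports Complex_Main "HOL-Computational_Algebra.Formal_Power_Series"
begin

definition diagram :: "nat \<Rightarrow> (nat \<times> nat) set \<Rightarrow> bool" where
  "diagram n A \<longleftrightarrow>
     A \<subseteq> {(i,j). 1 \<le> i \<and> i < j \<and> j \<le> n} \<and>
     (\<forall>a\<in>A. \<forall>b\<in>A. a \<noteq> b \<longrightarrow> {fst a, snd a} \<inter> {fst b, snd b} = {})"

definition endpoints :: "(nat \<times> nat) set \<Rightarrow> nat set" where
  "endpoints A = fst ` A \<union> snd ` A"

definition partner :: "(nat \<times> nat) set \<Rightarrow> nat \<Rightarrow> nat" where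
  "partner A x = (THE y. (x, y) \<in> A \<or> (y, x) \<in> A)"

text \<open>The cyclic shift gamma on the endpoints, taken in increasing order
  (the endpoints are not relabelled to 1..2k; the shift sends each endpoint to the
  next larger endpoint and the largest one to the smallest).\<close>
definition next_endpoint :: "(nat \<times> nat) set \<Rightarrow> nat \<Rightarrow> nat" where
  "next_endpoint A x =
     (if \<exists>y\<in>endpoints A. x < y then Min {y \<in> endpoints A. x < y} else Min (endpoints A))"

definition num_cycles :: "(nat \<Rightarrow> nat) \<Rightarrow> nat set \<Rightarrow> nat" where
  "num_cycles f V = card ((\<lambda>x. {(f ^^ m) x | m. True}) ` V)"

definition boundary_components :: "(nat \<times> nat) set \<Rightarrow> nat" where
  "boundary_components A = num_cycles (next_endpoint A \<circ> partner A) (endpoints A)"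

definition has_genus :: "(nat \<times> nat) set \<Rightarrow> nat \<Rightarrow> bool" where
  "has_genus A g \<longleftrightarrow>
     (if A = {} then g = 0
      else 2 - 2 * int g = 1 - int (card A) + int (boundary_components A))"

definition g_structure :: "nat \<Rightarrow> nat \<Rightarrow> (nat \<times> nat) set \<Rightarrow> bool" where
  "g_structure g n A \<longleftrightarrow> diagram n A \<and> has_genus A g \<and> (\<forall>i. (i, i + 1) \<notin> A)"

definition irreducible_diagram :: "nat \<Rightarrow> (nat \<times> nat) set \<Rightarrow> bool" where
  "irreducible_diagram n A \<longleftrightarrow>
     n \<ge> 1 \<and> \<not> (\<exists>k. 1 \<le> k \<and> k < n \<and> (\<forall>(i, j)\<in>A. \<not> (i \<le> k \<and> k < j)))"

definition d :: "nat \<Rightarrow> nat \<Rightarrow> nat" where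
  "d g n = card {A. g_structure g n A}"

definition dstar :: "nat \<Rightarrow> nat \<Rightarrow> nat" where
  "dstar g n = card {A. g_structure g n A \<and> irreducible_diagram n A}"

definition D :: "nat \<Rightarrow> real fps" where
  "D g = Abs_fps (\<lambda>n. of_nat (d g n))"

text \<open>dstar g 0 = 0 automatically, since irreducibility requires n >= 1.\<close>
definition Dstar :: "nat \<Rightarrow> real fps" where
  "Dstar g = Abs_fps (\<lambda>n. of_nat (dstar g n))"

end

theory Submission
  imports Defs "HOL-Combinatorics.Orbits"
begin

text \<open>A g-structure over [n], n \<ge> 1, is cut uniquely at its first split point k into an irreducible
  structure over [k] followed by a structure over [n - k]. Under this concatenation the numbers of
  arcs add and the numbers of boundary components add up to one less, so the genera add. Counting
  gives d_g(n) as the sum over k and g1 of d*_g1(k) d_(g - g1)(n - k), that is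
  D_g = [g = 0] + (\<Sum>g1 = 0..g. D*_g1 D_(g - g1)), and solving for D*_g with the invertible series
  D_0 yields both identities.\<close>

section \<open>Trajectories and cycle counts\<close>

definition trajectory :: "('a \<Rightarrow> 'a) \<Rightarrow> 'a \<Rightarrow> 'a set" where
  "trajectory f x = {(f ^^ m) x | m. True}"

lemma num_cycles_eq_card_trajectories: "num_cycles f V = card (trajectory f ` V)"
  unfolding num_cycles_def trajectory_def ..

lemma self_in_trajectory [simp]: "x \<in> trajectory f x"
  unfolding trajectory_def by (auto intro: exI[of _ 0])

lemma funpow_in_trajectory [simp]: "(f ^^ m) x \<in> trajectory f x"
  unfolding trajectory_def by auto

lemma trajectory_closed: "y \<in> trajectory f x \<Longrightarrow> f y \<in> trajectory f x"
  unfolding trajectory_def by (auto intro: exI[of _ "Suc m" for m])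

lemma trajectory_subset:
  assumes "f ` V \<subseteq> V" and "x \<in> V"
  shows "trajectory f x \<subseteq> V"
proof
  fix y assume "y \<in> trajectory f x"
  then obtain m where "y = (f ^^ m) x" unfolding trajectory_def by auto
  moreover have "(f ^^ m) x \<in> V" by (induction m) (use assms in auto)
  ultimately show "y \<in> V" by simp
qed

lemma trajectory_eq_orbit: "permutation f \<Longrightarrow> trajectory f x = orbit f x"
  by (simp add: trajectory_def orbit_altdef_permutation)

lemma trajectory_eq:
  assumes "permutation f" and "y \<in> trajectory f x"
  shows "trajectory f y = trajectory f x"
  using assms unfolding trajectory_eq_orbit[OF assms(1)]
  by (meson orbit_swap orbit_trans permutation_self_in_orbit subsetI subset_antisym)

lemma trajectory_sym: "permutation f \<Longrightarrow> y \<in> trajectory f x \<Longrightarrow> x \<in> trajectory f y"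
  using trajectory_eq by (metis self_in_trajectory)

lemma trajectory_bounded:
  "(f ^^ n) x = x \<Longrightarrow> 0 < n \<Longrightarrow> trajectory f x = {(f ^^ m) x | m. m < n}"
  unfolding trajectory_def by (auto simp: funpow_mod_eq intro: exI[where x="m mod n" for m])

lemma funpow_cong_on:
  assumes "\<And>x. x \<in> V \<Longrightarrow> f x = g x" and "f ` V \<subseteq> V" and "x \<in> V"
  shows "(f ^^ m) x = (g ^^ m) x \<and> (f ^^ m) x \<in> V"
  by (induction m) (use assms in auto)

lemma trajectory_cong:
  assumes "\<And>x. x \<in> V \<Longrightarrow> f x = g x" and "f ` V \<subseteq> V" and "x \<in> V"
  shows "trajectory f x = trajectory g x"
  unfolding trajectory_def using funpow_cong_on[OF assms] by simp

lemma num_cycles_cong: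
  assumes "\<And>x. x \<in> V \<Longrightarrow> f x = g x" and "f ` V \<subseteq> V"
  shows "num_cycles f V = num_cycles g V"
proof -
  have "trajectory f ` V = trajectory g ` V"
    using trajectory_cong[OF assms] by (intro image_cong) auto
  then show ?thesis by (simp add: num_cycles_eq_card_trajectories)
qed

lemma num_cycles_Un:
  assumes "V1 \<inter> V2 = {}" "f ` V1 \<subseteq> V1" "f ` V2 \<subseteq> V2" "finite V1" "finite V2"
  shows "num_cycles f (V1 \<union> V2) = num_cycles f V1 + num_cycles f V2"
proof -
  have "trajectory f ` V1 \<inter> trajectory f ` V2 = {}"
  proof (rule ccontr)
    assume "trajectory f ` V1 \<inter> trajectory f ` V2 \<noteq> {}"
    then obtain x y where xy: "x \<in> V1" "y \<in> V2" "trajectory f x = trajectory f y" by auto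
    then have "y \<in> V1" using trajectory_subset[OF assms(2) xy(1)] self_in_trajectory[of y f] by auto
    then show False using xy assms(1) by auto
  qed
  then show ?thesis unfolding num_cycles_eq_card_trajectories image_Un
    by (rule card_Un_disjoint[rotated 2]) (use assms in auto)
qed

lemma num_cycles_conj:
  assumes inj: "inj_on \<phi> V" and into: "f ` V \<subseteq> V"
    and conj: "\<And>x. x \<in> V \<Longrightarrow> f' (\<phi> x) = \<phi> (f x)"
  shows "num_cycles f' (\<phi> ` V) = num_cycles f V"
proof -
  have funpow: "(f' ^^ m) (\<phi> x) = \<phi> ((f ^^ m) x)" if "x \<in> V" for x m
    by (induction m) (use that funpow_cong_on[OF _ into that, of f] conj in auto)
  have "trajectory f' ` (\<phi> ` V) = (\<lambda>S. \<phi> ` S) ` (trajectory f ` V)"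
    using funpow unfolding trajectory_def by (auto simp: image_image image_iff)
  moreover have "inj_on (\<lambda>S. \<phi> ` S) (trajectory f ` V)"
    by (rule inj_onI) (use trajectory_subset[OF into] inj_on_image_eq_iff[OF inj] in auto)
  ultimately show ?thesis unfolding num_cycles_eq_card_trajectories by (simp add: card_image)
qed

section \<open>Composing with a transposition\<close>

lemma trajectory_comp_transpose_avoiding:
  assumes "a \<notin> trajectory f y" and "b \<notin> trajectory f y"
  shows "trajectory (f \<circ> Transposition.transpose a b) y = trajectory f y"
proof -
  have "((f \<circ> Transposition.transpose a b) ^^ m) y = (f ^^ m) y" for m
  proof (induction m)
    case (Suc m)
    have "(f ^^ m) y \<notin> {a, b}" using assms funpow_in_trajectory[of m f y] by blast
    then show ?case using Suc by simp
  qed simp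
  then show ?thesis unfolding trajectory_def by simp
qed

lemma trajectories_avoiding_comp_transpose:
  "{c \<in> trajectory (f \<circ> Transposition.transpose a b) ` V. a \<notin> c \<and> b \<notin> c} =
   {c \<in> trajectory f ` V. a \<notin> c \<and> b \<notin> c}"
proof -
  have "f \<circ> Transposition.transpose a b \<circ> Transposition.transpose a b = f"
    by (simp add: fun_eq_iff)
  then have "trajectory (f \<circ> Transposition.transpose a b) y = trajectory f y"
    if "a \<notin> trajectory f y \<and> b \<notin> trajectory f y \<or>
        a \<notin> trajectory (f \<circ> Transposition.transpose a b) y \<and>
        b \<notin> trajectory (f \<circ> Transposition.transpose a b) y" for y
    using that trajectory_comp_transpose_avoiding[of a f y b]
      trajectory_comp_transpose_avoiding[of a "f \<circ> Transposition.transpose a b" y b]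
    by auto
  then show ?thesis by (auto simp: image_iff)
qed

lemma card_trajectories_two_points:
  assumes perm: "permutation \<pi>" and "finite V" and "a \<in> V" and "b \<in> V"
  shows "card (trajectory \<pi> ` V) =
    card {c \<in> trajectory \<pi> ` V. a \<notin> c \<and> b \<notin> c} + (if a \<in> trajectory \<pi> b then 1 else 2)"
proof -
  define W where "W = {c \<in> trajectory \<pi> ` V. a \<notin> c \<and> b \<notin> c}"
  have "trajectory \<pi> ` V = W \<union> {trajectory \<pi> a, trajectory \<pi> b}"
    unfolding W_def using assms trajectory_eq[OF perm] by auto
  moreover have "trajectory \<pi> a \<notin> W" "trajectory \<pi> b \<notin> W"
    unfolding W_def by auto
  moreover have "trajectory \<pi> a = trajectory \<pi> b \<longleftrightarrow> a \<in> trajectory \<pi> b"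
    using trajectory_eq[OF perm] by (metis self_in_trajectory)
  moreover have "finite W" unfolding W_def using \<open>finite V\<close> by simp
  ultimately show ?thesis by (fold W_def) (auto simp: card_insert_if)
qed

text \<open>Following the trajectory of a under \<pi> \<circ> (a b) one walks along the trajectory of b under \<pi>
  until it first returns to a or to b; it meets b exactly when the trajectory of b avoids a.\<close>
lemma mem_trajectory_comp_transpose_iff:
  assumes perm: "permutation \<pi>" and "a \<noteq> b"
  shows "b \<in> trajectory (\<pi> \<circ> Transposition.transpose a b) a \<longleftrightarrow> a \<notin> trajectory \<pi> b"
proof -
  define \<pi>' where "\<pi>' = \<pi> \<circ> Transposition.transpose a b"
  obtain p where "p > 0" "(\<pi> ^^ p) b = b" using permutation_self[OF perm] by blast
  then have ex: "0 < p \<and> (\<pi> ^^ p) b \<in> {a, b}" by auto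
  define m0 where "m0 = (LEAST n. 0 < n \<and> (\<pi> ^^ n) b \<in> {a, b})"
  have m0: "0 < m0" "(\<pi> ^^ m0) b \<in> {a, b}"
    using LeastI[of "\<lambda>n. 0 < n \<and> (\<pi> ^^ n) b \<in> {a, b}", OF ex] unfolding m0_def by auto
  have before: "(\<pi> ^^ m) b \<notin> {a, b}" if "0 < m" "m < m0" for m
    using not_less_Least[of m "\<lambda>n. 0 < n \<and> (\<pi> ^^ n) b \<in> {a, b}"] that unfolding m0_def by auto
  have path: "(\<pi>' ^^ m) a = (\<pi> ^^ m) b" if "1 \<le> m" "m \<le> m0" for m
    using that
  proof (induction m)
    case (Suc m)
    then show ?case
      by (cases "m = 0") (use before[of m] in \<open>auto simp: \<pi>'_def\<close>)
  qed simp
  have not_b: "b \<noteq> (\<pi>' ^^ m) a" and not_a: "a \<noteq> (\<pi> ^^ m) b" if "m < m0" for m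
    using that path[of m] before[of m] \<open>a \<noteq> b\<close> by (cases "m = 0"; auto)+
  show ?thesis
  proof (cases "(\<pi> ^^ m0) b = b")
    case True
    then have "a \<notin> trajectory \<pi> b"
      using trajectory_bounded[OF True m0(1)] not_a by auto
    moreover have "b \<in> trajectory \<pi>' a"
      using funpow_in_trajectory[of m0 \<pi>' a] path[of m0] m0(1) True by simp
    ultimately show ?thesis unfolding \<pi>'_def by simp
  next
    case False
    then have hit: "(\<pi> ^^ m0) b = a" using m0 by auto
    then have "(\<pi>' ^^ m0) a = a" using path[of m0] m0(1) by simp
    then have "b \<notin> trajectory \<pi>' a"
      using trajectory_bounded[OF _ m0(1), of \<pi>'] not_b by auto
    moreover have "a \<in> trajectory \<pi> b" using funpow_in_trajectory[of m0 \<pi> b] hit by simp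
    ultimately show ?thesis unfolding \<pi>'_def by simp
  qed
qed

lemma card_trajectories_comp_transpose:
  assumes perm: "permutation \<pi>" and "finite V" "a \<in> V" "b \<in> V" "a \<noteq> b"
  shows "int (card (trajectory (\<pi> \<circ> Transposition.transpose a b) ` V)) =
    int (card (trajectory \<pi> ` V)) + (if a \<in> trajectory \<pi> b then 1 else - 1)"
proof -
  let ?\<pi>' = "\<pi> \<circ> Transposition.transpose a b"
  have perm': "permutation ?\<pi>'" by (intro permutation_compose perm permutation_swap_id)
  have "a \<in> trajectory ?\<pi>' b \<longleftrightarrow> a \<notin> trajectory \<pi> b"
    using mem_trajectory_comp_transpose_iff[OF perm \<open>a \<noteq> b\<close>] trajectory_sym[OF perm'] by blast
  then show ?thesis
    using card_trajectories_two_points[OF perm assms(2-4)]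
      card_trajectories_two_points[OF perm' assms(2-4)]
    unfolding trajectories_avoiding_comp_transpose by auto
qed

lemma permutation_perm_restrict:
  assumes "bij_betw f V V" and "finite V"
  shows "permutation (perm_restrict f V)"
proof -
  have "perm_restrict f V permutes V"
    by (rule bij_imp_permutes) (use assms(1) in \<open>auto simp: perm_restrict_def bij_betw_def inj_on_def\<close>)
  then show ?thesis using permutes_imp_permutation assms(2) by blast
qed

lemma num_cycles_comp_transpose:
  assumes bij: "bij_betw f V V" and fin: "finite V" and V: "a \<in> V" "b \<in> V" and "a \<noteq> b"
    and h: "\<And>x. x \<in> V \<Longrightarrow> h x = f (Transposition.transpose a b x)"
  shows "int (num_cycles h V) = int (num_cycles f V) + (if a \<in> trajectory f b then 1 else - 1)"
proof -
  define \<pi> where "\<pi> = perm_restrict f V"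
  have into: "f ` V \<subseteq> V" using bij by (simp add: bij_betw_def)
  have perm: "permutation \<pi>" unfolding \<pi>_def by (rule permutation_perm_restrict[OF bij fin])
  have \<pi>: "\<And>x. x \<in> V \<Longrightarrow> f x = \<pi> x" unfolding \<pi>_def by (simp add: perm_restrict_simps)
  have transp_in: "\<And>x. x \<in> V \<Longrightarrow> Transposition.transpose a b x \<in> V"
    using V by (simp add: transpose_def)
  have "num_cycles h V = num_cycles (\<pi> \<circ> Transposition.transpose a b) V"
    by (rule num_cycles_cong) (use h \<pi> into transp_in in auto)
  moreover have "num_cycles f V = num_cycles \<pi> V" by (rule num_cycles_cong[OF \<pi> into])
  moreover have "trajectory f b = trajectory \<pi> b" by (rule trajectory_cong[OF \<pi> into V(2)])
  ultimately show ?thesis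
    using card_trajectories_comp_transpose[OF perm fin V \<open>a \<noteq> b\<close>]
    by (simp add: num_cycles_eq_card_trajectories)
qed

lemma trajectory_eq_bij_betw:
  assumes bij: "bij_betw f V V" and "finite V" and "x \<in> V" and "y \<in> trajectory f x"
  shows "trajectory f y = trajectory f x"
proof -
  define \<pi> where "\<pi> = perm_restrict f V"
  have into: "f ` V \<subseteq> V" using bij by (simp add: bij_betw_def)
  have perm: "permutation \<pi>" unfolding \<pi>_def by (rule permutation_perm_restrict[OF bij \<open>finite V\<close>])
  have \<pi>: "\<And>x. x \<in> V \<Longrightarrow> f x = \<pi> x" unfolding \<pi>_def by (simp add: perm_restrict_simps)
  have "y \<in> V" using trajectory_subset[OF into \<open>x \<in> V\<close>] assms(4) by blast
  then show ?thesis
    using trajectory_cong[OF \<pi> into] \<open>x \<in> V\<close> trajectory_eq[OF perm] assms(4) by metis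
qed

lemma bij_betw_involution: "(\<And>x. x \<in> E \<Longrightarrow> p x \<in> E \<and> p (p x) = x) \<Longrightarrow> bij_betw p E E"
  by (rule bij_betw_byWitness[where f' = p]) auto

lemma transpose_involution_commute:
  assumes "\<And>x. x \<in> E \<Longrightarrow> p x \<in> E \<and> p (p x) = x" and "u \<in> E" "v \<in> E" "x \<in> E"
  shows "Transposition.transpose u v (p x) = p (Transposition.transpose (p u) (p v) x)"
proof -
  have inv: "p (p u) = u" "p (p v) = v" "p (p x) = x"
    using assms(1)[OF assms(2)] assms(1)[OF assms(3)] assms(1)[OF assms(4)] by blast+
  consider "x = p u" | "x = p v" | "x \<noteq> p u" "x \<noteq> p v" by blast
  then show ?thesis
  proof cases
    case 1
    then show ?thesis using inv by (simp only: transpose_apply_first transpose_apply_second)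
  next
    case 2
    then show ?thesis using inv by (simp only: transpose_apply_first transpose_apply_second)
  next
    case 3
    then have "p x \<noteq> u" "p x \<noteq> v" using inv by metis+
    with 3 show ?thesis by (simp add: transpose_apply_other)
  qed
qed

section \<open>The cyclic successor on a finite set\<close>

definition cyclic_succ :: "nat set \<Rightarrow> nat \<Rightarrow> nat" where
  "cyclic_succ E x = (if \<exists>y\<in>E. x < y then Min {y \<in> E. x < y} else Min E)"

lemma next_endpoint_eq_cyclic_succ: "next_endpoint A = cyclic_succ (endpoints A)"
  by (rule ext) (simp add: next_endpoint_def cyclic_succ_def)

lemma cyclic_succ_greater:
  assumes "finite E" "y \<in> E" "x < y"
  shows "x < cyclic_succ E x \<and> cyclic_succ E x \<le> y \<and> cyclic_succ E x \<in> E"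
proof -
  have S: "finite {y \<in> E. x < y}" "{y \<in> E. x < y} \<noteq> {}" using assms by auto
  have "cyclic_succ E x = Min {y \<in> E. x < y}" unfolding cyclic_succ_def using assms by auto
  then show ?thesis using Min_in[OF S] Min_le[OF S(1)] assms by auto
qed

lemma cyclic_succ_eqI:
  "finite E \<Longrightarrow> y \<in> E \<Longrightarrow> x < y \<Longrightarrow> (\<And>w. w \<in> E \<Longrightarrow> x < w \<Longrightarrow> y \<le> w) \<Longrightarrow> cyclic_succ E x = y"
  using cyclic_succ_greater[of E y x] by (meson le_antisym)

lemma cyclic_succ_wrap: "(\<And>y. y \<in> E \<Longrightarrow> y \<le> x) \<Longrightarrow> cyclic_succ E x = Min E"
  unfolding cyclic_succ_def by (meson leD)

lemma cyclic_succ_in: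
  assumes "finite E" "E \<noteq> {}" shows "cyclic_succ E x \<in> E"
proof (cases "\<exists>y\<in>E. x < y")
  case True
  then show ?thesis using cyclic_succ_greater[OF assms(1)] by blast
next
  case False
  then show ?thesis using Min_in[OF assms] by (simp add: cyclic_succ_def)
qed

lemma bij_betw_cyclic_succ:
  assumes fin: "finite E" and "E \<noteq> {}"
  shows "bij_betw (cyclic_succ E) E E"
proof -
  have neq: "cyclic_succ E x \<noteq> cyclic_succ E y" if "x \<in> E" "y \<in> E" "x < y" for x y
  proof (cases "\<exists>z\<in>E. y < z")
    case True
    then have "y < cyclic_succ E y" using cyclic_succ_greater[OF fin] by blast
    moreover have "cyclic_succ E x \<le> y" using cyclic_succ_greater[OF fin that(2,3)] by blast
    ultimately show ?thesis by simp
  next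
    case False
    then have "cyclic_succ E y = Min E" by (meson cyclic_succ_wrap not_le)
    moreover have "Min E \<le> x" using fin that by simp
    ultimately show ?thesis using cyclic_succ_greater[OF fin that(2,3)] by simp
  qed
  have "inj_on (cyclic_succ E) E"
    by (rule inj_onI, rule ccontr) (metis neq linorder_neqE_nat)
  then show ?thesis
    unfolding bij_betw_def using cyclic_succ_in[OF assms] endo_inj_surj[OF fin] by blast
qed

lemma num_cycles_cyclic_succ:
  assumes fin: "finite E" and ne: "E \<noteq> {}"
  shows "num_cycles (cyclic_succ E) E = 1"
proof -
  have reach: "y \<in> trajectory (cyclic_succ E) (Min E)" if "y \<in> E" for y
    using that
  proof (induction y rule: less_induct)
    case (less y)
    show ?case
    proof (cases "y = Min E")
      case False
      then have "Min E < y" using less.prems fin by (simp add: order_le_neq_trans)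
      then have S: "finite {w \<in> E. w < y}" "{w \<in> E. w < y} \<noteq> {}"
        using fin Min_in[OF fin ne] by auto
      define z where "z = Max {w \<in> E. w < y}"
      have z: "z \<in> E" "z < y" using Max_in[OF S] unfolding z_def by auto
      have "cyclic_succ E z = y"
      proof (rule cyclic_succ_eqI[OF fin less.prems z(2)])
        fix w assume "w \<in> E" "z < w"
        show "y \<le> w"
        proof (rule ccontr)
          assume "\<not> y \<le> w"
          with \<open>w \<in> E\<close> have "w \<le> z" unfolding z_def by (intro Max_ge[OF S(1)]) simp
          with \<open>z < w\<close> show False by simp
        qed
      qed
      then show ?thesis using less.IH[OF z(2,1)] trajectory_closed by metis
    qed simp
  qed
  have "trajectory (cyclic_succ E) ` E = {trajectory (cyclic_succ E) (Min E)}"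
    using trajectory_eq_bij_betw[OF bij_betw_cyclic_succ[OF fin ne] fin Min_in[OF fin ne] reach] ne
    by auto
  then show ?thesis by (simp add: num_cycles_eq_card_trajectories)
qed

lemma cyclic_succ_shift:
  assumes fin: "finite E" and "x \<in> E"
  shows "cyclic_succ ((\<lambda>y. y + k) ` E) (x + k) = cyclic_succ E x + k"
proof (cases "\<exists>y\<in>E. x < y")
  case True
  have S: "finite {y \<in> E. x < y}" "{y \<in> E. x < y} \<noteq> {}" using fin True by auto
  have eq: "{y \<in> (\<lambda>y. y + k) ` E. x + k < y} = (\<lambda>y. y + k) ` {y \<in> E. x < y}" by auto
  have "cyclic_succ ((\<lambda>y. y + k) ` E) (x + k) = Min ((\<lambda>y. y + k) ` {y \<in> E. x < y})"
    unfolding cyclic_succ_def eq using True by auto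
  also have "\<dots> = Min {y \<in> E. x < y} + k"
    using mono_Min_commute[of "\<lambda>y. y + k", OF _ S] by (simp add: mono_def)
  also have "\<dots> = cyclic_succ E x + k" unfolding cyclic_succ_def using True by simp
  finally show ?thesis .
next
  case False
  then have "\<not> (\<exists>y\<in>(\<lambda>y. y + k) ` E. x + k < y)" by auto
  then have "cyclic_succ ((\<lambda>y. y + k) ` E) (x + k) = Min ((\<lambda>y. y + k) ` E)"
    unfolding cyclic_succ_def by (rule if_not_P)
  also have "\<dots> = Min E + k"
    using mono_Min_commute[of "\<lambda>y. y + k", OF _ fin] \<open>x \<in> E\<close> by (metis empty_iff mono_def add_right_mono)
  also have "\<dots> = cyclic_succ E x + k" unfolding cyclic_succ_def using False by simp
  finally show ?thesis .
qed

lemma cyclic_succ_superset: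
  assumes fin: "finite E'" and "E \<subseteq> E'" and x: "x \<in> E" "x \<noteq> Max E"
    and beyond: "\<And>w. w \<in> E' \<Longrightarrow> w \<notin> E \<Longrightarrow> x < w \<Longrightarrow> Max E < w"
  shows "cyclic_succ E' x = cyclic_succ E x"
proof -
  have finE: "finite E" using finite_subset[OF \<open>E \<subseteq> E'\<close> fin] .
  have "x < Max E" using x finE by (simp add: order_neq_le_trans)
  then have s: "x < cyclic_succ E x" "cyclic_succ E x \<le> Max E" "cyclic_succ E x \<in> E"
    using cyclic_succ_greater[OF finE Max_in[OF finE]] x by auto
  show ?thesis
  proof (rule cyclic_succ_eqI[OF fin _ s(1)])
    show "cyclic_succ E x \<in> E'" using s(3) \<open>E \<subseteq> E'\<close> by blast
    fix w assume "w \<in> E'" "x < w"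
    then show "cyclic_succ E x \<le> w"
      using cyclic_succ_greater[OF finE, of w x] beyond[of w] s(2) by (cases "w \<in> E") auto
  qed
qed

text \<open>Juxtaposing E2 after E1 only changes where the two cycles close up: the maxima of E1 and E2
  swap their successors.\<close>
lemma cyclic_succ_Un:
  assumes f1: "finite E1" and f2: "finite E2" and n1: "E1 \<noteq> {}" and n2: "E2 \<noteq> {}"
    and lt: "\<And>x y. x \<in> E1 \<Longrightarrow> y \<in> E2 \<Longrightarrow> x < y" and x: "x \<in> E1 \<union> E2"
  shows "cyclic_succ (E1 \<union> E2) x =
    (let y = Transposition.transpose (Max E1) (Max E2) x
     in if y \<in> E1 then cyclic_succ E1 y else cyclic_succ E2 y)"
proof -
  have fU: "finite (E1 \<union> E2)" using f1 f2 by simp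
  have M1: "Max E1 \<in> E1" and M2: "Max E2 \<in> E2" using Max_in f1 f2 n1 n2 by auto
  have m1: "Min E1 \<in> E1" and m2: "Min E2 \<in> E2" using Min_in f1 f2 n1 n2 by auto
  have inner1: "cyclic_succ (E1 \<union> E2) x = cyclic_succ E1 x" if "x \<in> E1" "x \<noteq> Max E1" for x
    by (rule cyclic_succ_superset[OF fU _ that]) (use lt[OF M1] in auto)
  have inner2: "cyclic_succ (E1 \<union> E2) x = cyclic_succ E2 x" if "x \<in> E2" "x \<noteq> Max E2" for x
    by (rule cyclic_succ_superset[OF fU _ that]) (use lt[OF _ that(1)] in force)+
  have jump: "cyclic_succ (E1 \<union> E2) (Max E1) = Min E2"
  proof (rule cyclic_succ_eqI[OF fU])
    show "Min E2 \<in> E1 \<union> E2" "Max E1 < Min E2" using m2 lt[OF M1 m2] by simp_all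
    fix w assume "w \<in> E1 \<union> E2" "Max E1 < w"
    then show "Min E2 \<le> w" using Max_ge[OF f1, of w] Min_le[OF f2, of w] by auto
  qed
  have wrap: "cyclic_succ (E1 \<union> E2) (Max E2) = Min E1"
  proof -
    have "cyclic_succ (E1 \<union> E2) (Max E2) = Min (E1 \<union> E2)"
      by (rule cyclic_succ_wrap) (use Max_ge[OF f2] lt[OF _ M2] in \<open>auto intro: less_imp_le\<close>)
    also have "\<dots> = Min E1"
      using Min_Un[OF f1 n1 f2 n2] lt[OF m1 m2] by simp
    finally show ?thesis .
  qed
  have wrap1: "cyclic_succ E1 (Max E1) = Min E1" and wrap2: "cyclic_succ E2 (Max E2) = Min E2"
    by (simp_all add: cyclic_succ_wrap f1 f2)
  have "Max E1 \<notin> E2" "Max E2 \<notin> E1" using M1 M2 lt by blast+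
  then show ?thesis
    using x inner1 inner2 jump wrap wrap1 wrap2 M1 M2
    by (cases "x = Max E1"; cases "x = Max E2") (auto simp: Let_def)
qed

section \<open>Diagrams and their genus\<close>

lemma diagram_arc: "diagram n A \<Longrightarrow> (i, j) \<in> A \<Longrightarrow> 1 \<le> i \<and> i < j \<and> j \<le> n"
  unfolding diagram_def by auto

lemma diagram_arc_eq:
  assumes "diagram n A" "a \<in> A" "b \<in> A" "x \<in> {fst a, snd a}" "x \<in> {fst b, snd b}"
  shows "a = b"
proof -
  have "{fst a, snd a} \<inter> {fst b, snd b} = {}" if "a \<noteq> b"
    using assms(1-3) that unfolding diagram_def by blast
  then show ?thesis using assms(4,5) by blast
qed

lemma diagram_finite: "diagram n A \<Longrightarrow> finite A"
  unfolding diagram_def by (rule finite_subset[of _ "{1..n} \<times> {1..n}"]) auto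

lemma diagram_subset: "diagram n A \<Longrightarrow> S \<subseteq> A \<Longrightarrow> diagram n S"
  unfolding diagram_def by blast

lemma diagram_mono: "diagram n A \<Longrightarrow> n \<le> n' \<Longrightarrow> diagram n' A"
  unfolding diagram_def by fastforce

lemma diagram_0_iff: "diagram 0 A \<longleftrightarrow> A = {}"
  unfolding diagram_def by auto

lemma endpoints_iff: "x \<in> endpoints A \<longleftrightarrow> (\<exists>y. (x, y) \<in> A \<or> (y, x) \<in> A)"
  unfolding endpoints_def by force

lemma finite_endpoints: "finite A \<Longrightarrow> finite (endpoints A)"
  unfolding endpoints_def by simp

lemma endpoints_empty_iff: "endpoints A = {} \<longleftrightarrow> A = {}"
  unfolding endpoints_def by auto

lemma endpoints_Un: "endpoints (A \<union> B) = endpoints A \<union> endpoints B"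
  unfolding endpoints_def by auto

lemma endpoints_insert: "endpoints (insert (i, j) A) = {i, j} \<union> endpoints A"
  unfolding endpoints_def by auto

lemma endpoints_mono: "S \<subseteq> A \<Longrightarrow> endpoints S \<subseteq> endpoints A"
  unfolding endpoints_def by auto

lemma endpoints_bound: "diagram n A \<Longrightarrow> x \<in> endpoints A \<Longrightarrow> 1 \<le> x \<and> x \<le> n"
  unfolding endpoints_iff using diagram_arc by fastforce

lemma partner_arc:
  assumes d: "diagram n A" and a: "(x, y) \<in> A"
  shows "partner A x = y \<and> partner A y = x"
proof -
  have "partner A x = y" unfolding partner_def
  proof (rule the_equality)
    fix z assume "(x, z) \<in> A \<or> (z, x) \<in> A"
    then show "z = y"
    proof
      assume z: "(x, z) \<in> A" then show ?thesis using diagram_arc_eq[OF d z a, of x] by simp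
    next
      assume z: "(z, x) \<in> A"
      then have "(z, x) = (x, y)" using diagram_arc_eq[OF d z a, of x] by simp
      then show ?thesis using diagram_arc[OF d z] by simp
    qed
  qed (use a in simp)
  moreover have "partner A y = x" unfolding partner_def
  proof (rule the_equality)
    fix z assume "(y, z) \<in> A \<or> (z, y) \<in> A"
    then show "z = x"
    proof
      assume z: "(y, z) \<in> A"
      then have "(y, z) = (x, y)" using diagram_arc_eq[OF d z a, of y] by simp
      then show ?thesis using diagram_arc[OF d a] by simp
    next
      assume z: "(z, y) \<in> A" then show ?thesis using diagram_arc_eq[OF d z a, of y] by simp
    qed
  qed (use a in simp)
  ultimately show ?thesis ..
qed

lemma partner_subdiagram:
  assumes "diagram n A" "diagram m S" "S \<subseteq> A" "x \<in> endpoints S"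
  shows "partner A x = partner S x"
proof -
  obtain y where "(x, y) \<in> S \<or> (y, x) \<in> S" using assms(4) endpoints_iff by metis
  then show ?thesis
  proof
    assume a: "(x, y) \<in> S"
    then show ?thesis using partner_arc[OF assms(1)] partner_arc[OF assms(2) a] assms(3) by auto
  next
    assume a: "(y, x) \<in> S"
    then show ?thesis using partner_arc[OF assms(1)] partner_arc[OF assms(2) a] assms(3) by auto
  qed
qed

lemma partner_in_endpoints:
  assumes d: "diagram n A" and x: "x \<in> endpoints A"
  shows "partner A x \<in> endpoints A \<and> partner A (partner A x) = x"
proof -
  obtain y where "(x, y) \<in> A \<or> (y, x) \<in> A" using x endpoints_iff by metis
  then show ?thesis
  proof
    assume a: "(x, y) \<in> A"
    then show ?thesis using partner_arc[OF d a] diagram_arc[OF d a] endpoints_iff by auto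
  next
    assume a: "(y, x) \<in> A"
    then show ?thesis using partner_arc[OF d a] diagram_arc[OF d a] endpoints_iff by auto
  qed
qed

definition partner_on :: "(nat \<times> nat) set \<Rightarrow> nat \<Rightarrow> nat" where
  "partner_on A x = (if x \<in> endpoints A then partner A x else x)"

lemma partner_on_partner_on: "diagram n A \<Longrightarrow> partner_on A (partner_on A x) = x"
  unfolding partner_on_def using partner_in_endpoints by auto

lemma partner_on_subdiagram:
  assumes "diagram n C" "diagram m S" "S \<subseteq> C" "x \<in> endpoints S"
  shows "partner_on C x = partner_on S x"
  using assms endpoints_mono[OF assms(3)] partner_subdiagram[OF assms] unfolding partner_on_def
  by auto

lemma partner_on_in_iff:
  assumes "diagram n A" and "endpoints A \<subseteq> E"
  shows "partner_on A x \<in> E \<longleftrightarrow> x \<in> E"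
  using assms partner_in_endpoints[OF assms(1)] unfolding partner_on_def by auto

lemma bij_betw_partner_on:
  assumes "diagram n A" and "endpoints A \<subseteq> E"
  shows "bij_betw (partner_on A) E E"
  by (rule bij_betw_involution) (use partner_on_partner_on[OF assms(1)] partner_on_in_iff[OF assms] in auto)

lemma partner_on_insert:
  assumes d: "diagram n (insert (i, j) F)" and new: "(i, j) \<notin> F"
  shows "partner_on (insert (i, j) F) x = partner_on F (Transposition.transpose i j x)"
proof -
  let ?A = "insert (i, j) F"
  have dF: "diagram n F" using diagram_subset[OF d] by blast
  have "i < j" using diagram_arc[OF d] by blast
  have fresh: "y \<notin> endpoints F" if "y \<in> {i, j}" for y
  proof
    assume "y \<in> endpoints F"
    then obtain b where "b \<in> F" "y \<in> {fst b, snd b}" unfolding endpoints_iff by force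
    then have "b = (i, j)" using diagram_arc_eq[OF d, of b "(i, j)" y] that by auto
    with \<open>b \<in> F\<close> new show False by simp
  qed
  have pij: "partner ?A i = j" "partner ?A j = i" using partner_arc[OF d, of i j] by auto
  have other: "partner ?A x = partner F x" if "x \<in> endpoints F"
    using partner_subdiagram[OF d dF _ that] by blast
  show ?thesis
    using fresh pij other \<open>i < j\<close> unfolding partner_on_def endpoints_insert
    by (cases "x = i"; cases "x = j") (auto simp: transpose_apply_other)
qed

lemma boundary_components_eq:
  assumes "diagram n A"
  shows "boundary_components A = num_cycles (cyclic_succ (endpoints A) \<circ> partner_on A) (endpoints A)"
  unfolding boundary_components_def next_endpoint_eq_cyclic_succ
proof (rule num_cycles_cong)
  have "finite (endpoints A)" using finite_endpoints diagram_finite assms by blast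
  then show "(cyclic_succ (endpoints A) \<circ> partner A) ` endpoints A \<subseteq> endpoints A"
    using cyclic_succ_in by auto
qed (simp add: partner_on_def)

text \<open>Adding one arc composes the permutation with a transposition, which changes the number of
  cycles by one; starting from the single cycle of the backbone this gives r \<le> k + 1 and
  r \<equiv> k + 1 (mod 2).\<close>
lemma num_cycles_partner_on_bounds:
  assumes d: "diagram n A" and ne: "A \<noteq> {}" and "S \<subseteq> A"
  shows "num_cycles (cyclic_succ (endpoints A) \<circ> partner_on S) (endpoints A) \<le> card S + 1 \<and>
    even (num_cycles (cyclic_succ (endpoints A) \<circ> partner_on S) (endpoints A) + card S + 1)"
proof -
  let ?E = "endpoints A"
  have finA: "finite A" using diagram_finite[OF d] .
  have fin: "finite ?E" using finite_endpoints finA by blast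
  have neE: "?E \<noteq> {}" using ne endpoints_empty_iff by blast
  from finite_subset[OF \<open>S \<subseteq> A\<close> finA] \<open>S \<subseteq> A\<close> show ?thesis
  proof (induction S rule: finite_subset_induct')
    case empty
    have "partner_on {} = id" by (simp add: fun_eq_iff partner_on_def endpoints_def)
    then show ?case using num_cycles_cyclic_succ[OF fin neE] by simp
  next
    case (insert a F)
    obtain i j where a: "a = (i, j)" by (cases a)
    have dF: "diagram n F" and dF': "diagram n (insert (i, j) F)"
      using diagram_subset[OF d] insert a by auto
    have new: "(i, j) \<notin> F" using insert a by simp
    have "i \<noteq> j" "i \<in> ?E" "j \<in> ?E"
      using diagram_arc[OF d, of i j] insert a endpoints_iff by auto
    let ?f = "cyclic_succ ?E \<circ> partner_on F"
    have bij: "bij_betw ?f ?E ?E"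
      using bij_betw_trans[OF bij_betw_partner_on[OF dF] bij_betw_cyclic_succ[OF fin neE]]
        endpoints_mono insert by blast
    have step: "int (num_cycles (cyclic_succ ?E \<circ> partner_on (insert a F)) ?E) =
        int (num_cycles ?f ?E) + (if i \<in> trajectory ?f j then 1 else - 1)"
      by (rule num_cycles_comp_transpose[OF bij fin \<open>i \<in> ?E\<close> \<open>j \<in> ?E\<close> \<open>i \<noteq> j\<close>])
         (simp add: a partner_on_insert[OF dF' new])
    define N where "N = num_cycles (cyclic_succ ?E \<circ> partner_on (insert a F)) ?E"
    define M where "M = num_cycles ?f ?E"
    have "N \<le> card F + 1 + 1 \<and> even (N + (card F + 1) + 1)"
      using step insert.IH unfolding N_def[symmetric] M_def[symmetric]
      by (cases "i \<in> trajectory ?f j") (simp_all, presburger+)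
    moreover have "card (insert a F) = card F + 1" using insert finite_subset[OF _ finA] by simp
    ultimately show ?case unfolding N_def by (simp only:)
  qed
qed

definition genus :: "(nat \<times> nat) set \<Rightarrow> nat" where
  "genus A = (if A = {} then 0 else (card A + 1 - boundary_components A) div 2)"

lemma boundary_components_bounds:
  assumes "diagram n A" "A \<noteq> {}"
  shows "boundary_components A \<le> card A + 1 \<and> even (boundary_components A + card A + 1)"
  using num_cycles_partner_on_bounds[OF assms order_refl] boundary_components_eq[OF assms(1)]
  by simp

lemma card_eq_boundary_components_genus:
  assumes "diagram n A" "A \<noteq> {}"
  shows "card A + 1 = boundary_components A + 2 * genus A"
  using boundary_components_bounds[OF assms] assms(2) unfolding genus_def
  by (auto elim!: evenE)

lemma has_genus_iff:
  assumes "diagram n A"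
  shows "has_genus A g \<longleftrightarrow> g = genus A"
proof (cases "A = {}")
  case False
  then show ?thesis
    using card_eq_boundary_components_genus[OF assms False] unfolding has_genus_def by auto
qed (simp add: has_genus_def genus_def)

section \<open>Concatenation of diagrams\<close>

definition shift_arcs :: "nat \<Rightarrow> (nat \<times> nat) set \<Rightarrow> (nat \<times> nat) set" where
  "shift_arcs k B = (\<lambda>(i, j). (i + k, j + k)) ` B"

lemma shifted_arc_in_shift_arcs_iff: "(x + k, y + k) \<in> shift_arcs k B \<longleftrightarrow> (x, y) \<in> B"
  unfolding shift_arcs_def by force

lemma endpoints_shift_arcs: "endpoints (shift_arcs k B) = (\<lambda>x. x + k) ` endpoints B"
  unfolding endpoints_def shift_arcs_def by force

lemma card_shift_arcs: "card (shift_arcs k B) = card B"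
  unfolding shift_arcs_def by (rule card_image) (auto simp: inj_on_def)

lemma shift_arcs_empty_iff: "shift_arcs k B = {} \<longleftrightarrow> B = {}"
  unfolding shift_arcs_def by auto

lemma diagram_concat:
  assumes dA: "diagram k A" and dB: "diagram m B"
  shows "diagram (k + m) (A \<union> shift_arcs k B)"
  unfolding diagram_def
proof (intro conjI ballI impI)
  show "A \<union> shift_arcs k B \<subseteq> {(i, j). 1 \<le> i \<and> i < j \<and> j \<le> k + m}"
    using diagram_arc[OF dA] diagram_arc[OF dB] unfolding shift_arcs_def by fastforce
  fix a b assume a: "a \<in> A \<union> shift_arcs k B" and b: "b \<in> A \<union> shift_arcs k B" and "a \<noteq> b"
  consider "a \<in> A" "b \<in> A" | "a \<in> shift_arcs k B" "b \<in> shift_arcs k B"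
    | "a \<in> A" "b \<in> shift_arcs k B" | "a \<in> shift_arcs k B" "b \<in> A"
    using a b by blast
  then show "{fst a, snd a} \<inter> {fst b, snd b} = {}"
  proof cases
    case 1
    then show ?thesis using diagram_arc_eq[OF dA, of a b] \<open>a \<noteq> b\<close> by blast
  next
    case 2
    then obtain i j i' j' where ab: "a = (i + k, j + k)" "(i, j) \<in> B" "b = (i' + k, j' + k)" "(i', j') \<in> B"
      unfolding shift_arcs_def by auto
    then show ?thesis using diagram_arc_eq[OF dB ab(2) ab(4)] \<open>a \<noteq> b\<close> by auto
  next
    case 3
    then obtain i j where "b = (i + k, j + k)" "(i, j) \<in> B" unfolding shift_arcs_def by auto
    then show ?thesis
      using 3 diagram_arc[OF dA, of "fst a" "snd a"] diagram_arc[OF dB, of i j] by auto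
  next
    case 4
    then obtain i j where "a = (i + k, j + k)" "(i, j) \<in> B" unfolding shift_arcs_def by auto
    then show ?thesis
      using 4 diagram_arc[OF dA, of "fst b" "snd b"] diagram_arc[OF dB, of i j] by auto
  qed
qed

lemma diagram_shift_arcs: "diagram m B \<Longrightarrow> diagram (k + m) (shift_arcs k B)"
  using diagram_concat[of k "{}" m B] by (simp add: diagram_def)

lemma boundary_components_shift_arcs:
  assumes dB: "diagram m B"
  shows "boundary_components (shift_arcs k B) = boundary_components B"
proof -
  let ?E = "endpoints B"
  have fin: "finite ?E" using finite_endpoints diagram_finite dB by blast
  have dB': "diagram (k + m) (shift_arcs k B)" using diagram_shift_arcs[OF dB] .
  have partner_shift: "partner (shift_arcs k B) (x + k) = partner B x + k" if x: "x \<in> ?E" for x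
  proof -
    obtain y where "(x, y) \<in> B \<or> (y, x) \<in> B" using x endpoints_iff by metis
    then show ?thesis
      using partner_arc[OF dB] partner_arc[OF dB'] shifted_arc_in_shift_arcs_iff by metis
  qed
  show ?thesis
    unfolding boundary_components_def next_endpoint_eq_cyclic_succ endpoints_shift_arcs
  proof (rule num_cycles_conj)
    show "inj_on (\<lambda>x. x + k) ?E" by (simp add: inj_on_def)
    show "(cyclic_succ ?E \<circ> partner B) ` ?E \<subseteq> ?E" using cyclic_succ_in[OF fin] by auto
    fix x assume "x \<in> ?E"
    then show "(cyclic_succ ((\<lambda>x. x + k) ` ?E) \<circ> partner (shift_arcs k B)) (x + k) =
        (cyclic_succ ?E \<circ> partner B) x + k"
      using partner_shift partner_in_endpoints[OF dB] cyclic_succ_shift[OF fin] by simp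
  qed
qed

lemma genus_shift_arcs: "diagram m B \<Longrightarrow> genus (shift_arcs k B) = genus B"
  by (simp add: genus_def boundary_components_shift_arcs card_shift_arcs shift_arcs_empty_iff)

lemma cyclic_succ_Un_comp_involution:
  assumes f1: "finite E1" and f2: "finite E2" and n1: "E1 \<noteq> {}" and n2: "E2 \<noteq> {}"
    and lt: "\<And>x y. x \<in> E1 \<Longrightarrow> y \<in> E2 \<Longrightarrow> x < y"
    and inv: "\<And>x. x \<in> E1 \<union> E2 \<Longrightarrow> p x \<in> E1 \<union> E2 \<and> p (p x) = x" and x: "x \<in> E1 \<union> E2"
  shows "cyclic_succ (E1 \<union> E2) (p x) =
    (let y = p (Transposition.transpose (p (Max E1)) (p (Max E2)) x)
     in if y \<in> E1 then cyclic_succ E1 y else cyclic_succ E2 y)"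
proof -
  have M: "Max E1 \<in> E1 \<union> E2" "Max E2 \<in> E1 \<union> E2" using Max_in f1 f2 n1 n2 by auto
  have "Transposition.transpose (Max E1) (Max E2) (p x) =
      p (Transposition.transpose (p (Max E1)) (p (Max E2)) x)"
    using transpose_involution_commute[of "E1 \<union> E2" p, OF inv M x] by blast
  then show ?thesis using cyclic_succ_Un[OF f1 f2 n1 n2 lt inv[OF x, THEN conjunct1]] by simp
qed

text \<open>On E1 \<union> E2 the map \<gamma> \<circ> p is the disjoint union of the maps for E1 and E2 composed with
  one transposition, which joins two cycles lying in different halves.\<close>
lemma num_cycles_cyclic_succ_Un:
  assumes f1: "finite E1" and f2: "finite E2" and n1: "E1 \<noteq> {}" and n2: "E2 \<noteq> {}"
    and lt: "\<And>x y. x \<in> E1 \<Longrightarrow> y \<in> E2 \<Longrightarrow> x < y"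
    and inv1: "\<And>x. x \<in> E1 \<Longrightarrow> p x \<in> E1 \<and> p (p x) = x"
    and inv2: "\<And>x. x \<in> E2 \<Longrightarrow> p x \<in> E2 \<and> p (p x) = x"
  shows "num_cycles (cyclic_succ (E1 \<union> E2) \<circ> p) (E1 \<union> E2) + 1 =
    num_cycles (cyclic_succ E1 \<circ> p) E1 + num_cycles (cyclic_succ E2 \<circ> p) E2"
proof -
  have disj: "E1 \<inter> E2 = {}" using lt by fastforce
  have inv: "p x \<in> E1 \<union> E2 \<and> p (p x) = x" if "x \<in> E1 \<union> E2" for x
    using that inv1 inv2 by blast
  define g where "g x = (if p x \<in> E1 then cyclic_succ E1 (p x) else cyclic_succ E2 (p x))" for x
  have g1: "g x = (cyclic_succ E1 \<circ> p) x" if "x \<in> E1" for x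
    using that inv1 unfolding g_def by simp
  have g2: "g x = (cyclic_succ E2 \<circ> p) x" if "x \<in> E2" for x
    using that inv2 disj unfolding g_def by auto
  have "bij_betw (cyclic_succ E1 \<circ> p) E1 E1" "bij_betw (cyclic_succ E2 \<circ> p) E2 E2"
    using bij_betw_trans[OF bij_betw_involution bij_betw_cyclic_succ] inv1 inv2 f1 f2 n1 n2
    by blast+
  then have bij1: "bij_betw g E1 E1" and bij2: "bij_betw g E2 E2"
    using g1 g2 by (auto cong: bij_betw_cong)
  have gE1: "g ` E1 \<subseteq> E1" and gE2: "g ` E2 \<subseteq> E2"
    using bij1 bij2 by (simp_all add: bij_betw_def)
  have M1: "Max E1 \<in> E1" and M2: "Max E2 \<in> E2" using Max_in f1 f2 n1 n2 by auto
  have transposed: "(cyclic_succ (E1 \<union> E2) \<circ> p) x =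
      g (Transposition.transpose (p (Max E1)) (p (Max E2)) x)" if "x \<in> E1 \<union> E2" for x
    using cyclic_succ_Un_comp_involution[OF f1 f2 n1 n2 lt inv that] unfolding g_def by (simp add: Let_def)
  have pM: "p (Max E1) \<in> E1" "p (Max E2) \<in> E2" using inv1[OF M1] inv2[OF M2] by simp_all
  have "trajectory g (p (Max E2)) \<subseteq> E2" by (rule trajectory_subset[OF gE2 pM(2)])
  moreover have "p (Max E1) \<notin> E2" using pM(1) disj by auto
  ultimately have apart: "p (Max E1) \<notin> trajectory g (p (Max E2))" by auto
  have "p (Max E1) \<noteq> p (Max E2)" using pM(2) \<open>p (Max E1) \<notin> E2\<close> by auto
  then have "int (num_cycles (cyclic_succ (E1 \<union> E2) \<circ> p) (E1 \<union> E2)) =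
      int (num_cycles g (E1 \<union> E2)) - 1"
    using num_cycles_comp_transpose[OF bij_betw_combine[OF bij1 bij2 disj] _ _ _ _ transposed]
      f1 f2 apart pM by (simp add: o_def)
  moreover have "num_cycles g (E1 \<union> E2) = num_cycles g E1 + num_cycles g E2"
    by (rule num_cycles_Un[OF disj gE1 gE2 f1 f2])
  moreover have "num_cycles g E1 = num_cycles (cyclic_succ E1 \<circ> p) E1"
    by (rule num_cycles_cong[OF g1 gE1])
  moreover have "num_cycles g E2 = num_cycles (cyclic_succ E2 \<circ> p) E2"
    by (rule num_cycles_cong[OF g2 gE2])
  ultimately show ?thesis by linarith
qed

lemma endpoints_less_shifted:
  assumes "diagram k A" "diagram m B" "x \<in> endpoints A" "y \<in> endpoints (shift_arcs k B)"
  shows "x < y"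
  using assms(3,4) endpoints_bound[OF assms(1)] endpoints_bound[OF assms(2)]
  unfolding endpoints_shift_arcs by fastforce

lemma boundary_components_concat:
  assumes dA: "diagram k A" and dB: "diagram m B" and "A \<noteq> {}" and "B \<noteq> {}"
  shows "boundary_components (A \<union> shift_arcs k B) + 1 =
    boundary_components A + boundary_components (shift_arcs k B)"
proof -
  define B' where "B' = shift_arcs k B"
  define C where "C = A \<union> B'"
  have dB': "diagram (k + m) B'" unfolding B'_def using diagram_shift_arcs[OF dB] .
  have dC: "diagram (k + m) C" unfolding C_def B'_def using diagram_concat[OF dA dB] .
  have dA': "diagram (k + m) A" using diagram_mono[OF dA] by simp
  have fin: "finite (endpoints A)" "finite (endpoints B')"
    using finite_endpoints diagram_finite dA dB' by blast+
  have ne: "endpoints A \<noteq> {}" "endpoints B' \<noteq> {}"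
    unfolding B'_def using assms(3,4) endpoints_empty_iff shift_arcs_empty_iff by auto
  have dS: "diagram (k + m) S" if "S = A \<or> S = B'" for S using that dA' dB' by blast
  have agree: "partner_on C x = partner_on S x" if S: "S = A \<or> S = B'" and x: "x \<in> endpoints S"
    for S x
    by (rule partner_on_subdiagram[OF dC dS[OF S] _ x]) (use S in \<open>auto simp: C_def\<close>)
  have inv: "partner_on C x \<in> endpoints S \<and> partner_on C (partner_on C x) = x"
    if S: "S = A \<or> S = B'" and x: "x \<in> endpoints S" for S x
    using agree[OF S x] partner_on_in_iff[OF dS[OF S] order_refl, of x] x
      partner_on_partner_on[OF dC, of x] by simp
  have cong: "num_cycles (cyclic_succ (endpoints S) \<circ> partner_on C) (endpoints S) =
      boundary_components S" if S: "S = A \<or> S = B'" for S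
  proof -
    have "cyclic_succ (endpoints S) x \<in> endpoints S" for x
      using S fin ne cyclic_succ_in by auto
    then show ?thesis
      unfolding boundary_components_eq[OF dS[OF S]]
      by (intro num_cycles_cong) (use agree[OF S] inv[OF S] in auto)
  qed
  have "num_cycles (cyclic_succ (endpoints A \<union> endpoints B') \<circ> partner_on C)
      (endpoints A \<union> endpoints B') + 1 = boundary_components A + boundary_components B'"
    using num_cycles_cyclic_succ_Un[OF fin ne endpoints_less_shifted[OF dA dB, folded B'_def]
        inv[of A] inv[of B']] cong[of A] cong[of B'] by simp
  then show ?thesis
    using boundary_components_eq[OF dC] unfolding C_def B'_def endpoints_Un by simp
qed

lemma genus_concat:
  assumes dA: "diagram k A" and dB: "diagram m B"
  shows "genus (A \<union> shift_arcs k B) = genus A + genus B"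
proof (cases "A = {} \<or> B = {}")
  case True
  have "genus {} = 0" by (simp add: genus_def)
  with True show ?thesis using genus_shift_arcs[OF dB] by (auto simp: shift_arcs_def)
next
  case False
  let ?C = "A \<union> shift_arcs k B"
  have dC: "diagram (k + m) ?C" using diagram_concat[OF dA dB] .
  have "A \<inter> shift_arcs k B = {}"
    using diagram_arc[OF dA] diagram_arc[OF dB] by (force simp: shift_arcs_def)
  then have "card ?C = card A + card B"
    using card_Un_disjoint diagram_finite[OF dA] diagram_finite[OF diagram_shift_arcs[OF dB]]
      card_shift_arcs by metis
  then show ?thesis
    using card_eq_boundary_components_genus[OF dC] card_eq_boundary_components_genus[OF dA]
      card_eq_boundary_components_genus[OF dB] boundary_components_concat[OF dA dB]
      boundary_components_shift_arcs[OF dB] False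
    by auto
qed

section \<open>Decomposition at the first split point\<close>

definition no_unit_arcs :: "(nat \<times> nat) set \<Rightarrow> bool" where
  "no_unit_arcs A \<longleftrightarrow> (\<forall>i. (i, i + 1) \<notin> A)"

lemma g_structure_iff: "g_structure g n A \<longleftrightarrow> diagram n A \<and> genus A = g \<and> no_unit_arcs A"
  unfolding g_structure_def no_unit_arcs_def using has_genus_iff by metis

lemma no_unit_arcs_concat: "no_unit_arcs A \<Longrightarrow> no_unit_arcs B \<Longrightarrow> no_unit_arcs (A \<union> shift_arcs k B)"
  unfolding no_unit_arcs_def shift_arcs_def by auto

lemma g_structure_concat:
  assumes "g_structure g1 k A" and "g_structure g2 m B"
  shows "g_structure (g1 + g2) (k + m) (A \<union> shift_arcs k B)"
  using assms diagram_concat genus_concat no_unit_arcs_concat unfolding g_structure_iff by blast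

definition splits_at :: "(nat \<times> nat) set \<Rightarrow> nat \<Rightarrow> bool" where
  "splits_at C k \<longleftrightarrow> (\<forall>(i, j)\<in>C. \<not> (i \<le> k \<and> k < j))"

lemma irreducible_diagram_iff:
  "irreducible_diagram n A \<longleftrightarrow> 1 \<le> n \<and> (\<forall>k. 1 \<le> k \<and> k < n \<longrightarrow> \<not> splits_at A k)"
  unfolding irreducible_diagram_def splits_at_def by blast

lemma splits_at_length: "diagram n C \<Longrightarrow> splits_at C n"
  unfolding splits_at_def using diagram_arc by fastforce

definition left_part :: "(nat \<times> nat) set \<Rightarrow> nat \<Rightarrow> (nat \<times> nat) set" where
  "left_part C k = {(i, j) \<in> C. j \<le> k}"

definition right_part :: "(nat \<times> nat) set \<Rightarrow> nat \<Rightarrow> (nat \<times> nat) set" where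
  "right_part C k = (\<lambda>(i, j). (i - k, j - k)) ` {(i, j) \<in> C. k < i}"

lemma diagram_left_part: "diagram n C \<Longrightarrow> diagram k (left_part C k)"
  unfolding diagram_def left_part_def by fastforce

lemma diagram_right_part:
  assumes d: "diagram n C"
  shows "diagram (n - k) (right_part C k)"
  unfolding diagram_def
proof (intro conjI ballI impI)
  show "right_part C k \<subseteq> {(i, j). 1 \<le> i \<and> i < j \<and> j \<le> n - k}"
    using diagram_arc[OF d] unfolding right_part_def by fastforce
  fix a b assume a: "a \<in> right_part C k" and b: "b \<in> right_part C k" and "a \<noteq> b"
  obtain i j where aij: "a = (i - k, j - k)" "(i, j) \<in> C" "k < i" using a unfolding right_part_def by auto
  obtain i' j' where bij: "b = (i' - k, j' - k)" "(i', j') \<in> C" "k < i'"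
    using b unfolding right_part_def by auto
  have "i < j" "i' < j'" using diagram_arc[OF d] aij bij by blast+
  then have "{i, j} \<inter> {i', j'} = {}"
    using diagram_arc_eq[OF d aij(2) bij(2)] \<open>a \<noteq> b\<close> aij bij by auto
  then show "{fst a, snd a} \<inter> {fst b, snd b} = {}" using aij bij \<open>i < j\<close> \<open>i' < j'\<close> by auto
qed

lemma no_unit_arcs_left_part: "no_unit_arcs C \<Longrightarrow> no_unit_arcs (left_part C k)"
  unfolding no_unit_arcs_def left_part_def by auto

lemma no_unit_arcs_right_part: "no_unit_arcs C \<Longrightarrow> no_unit_arcs (right_part C k)"
  unfolding no_unit_arcs_def
proof (intro allI notI)
  fix x assume none: "\<forall>i. (i, i + 1) \<notin> C" and "(x, x + 1) \<in> right_part C k"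
  then obtain a b where "(a, b) \<in> C" "k < a" "x = a - k" "x + 1 = b - k"
    unfolding right_part_def by auto
  then have "b = a + 1" by simp
  with \<open>(a, b) \<in> C\<close> none show False by blast
qed

lemma splits_at_decompose:
  assumes "splits_at C k" and d: "diagram n C"
  shows "C = left_part C k \<union> shift_arcs k (right_part C k)"
proof (intro equalityI subsetI)
  fix p assume p: "p \<in> C"
  obtain i j where ij: "p = (i, j)" by (cases p)
  show "p \<in> left_part C k \<union> shift_arcs k (right_part C k)"
  proof (cases "j \<le> k")
    case False
    then have "k < i" using assms p ij unfolding splits_at_def by force
    then have "(i - k, j - k) \<in> right_part C k" using p ij unfolding right_part_def by force
    then show ?thesis
      using shifted_arc_in_shift_arcs_iff[of "i - k" k "j - k"] \<open>k < i\<close> False ij by simp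
  qed (use p ij in \<open>simp add: left_part_def\<close>)
next
  fix p assume "p \<in> left_part C k \<union> shift_arcs k (right_part C k)"
  then show "p \<in> C"
  proof
    assume "p \<in> shift_arcs k (right_part C k)"
    then obtain i j where "p = (i - k + k, j - k + k)" "(i, j) \<in> C" "k < i"
      unfolding shift_arcs_def right_part_def by auto
    moreover have "i < j" using calculation diagram_arc[OF d] by blast
    ultimately show ?thesis by simp
  qed (auto simp: left_part_def)
qed

lemma concat_parts:
  assumes dA: "diagram k A" and dB: "diagram m B"
  shows "left_part (A \<union> shift_arcs k B) k = A" "right_part (A \<union> shift_arcs k B) k = B"
    "splits_at (A \<union> shift_arcs k B) k"
proof -
  have a: "j \<le> k" "i < j" "1 \<le> i" if "(i, j) \<in> A" for i j using diagram_arc[OF dA that] by auto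
  have b: "1 \<le> i" "i < j" if "(i, j) \<in> B" for i j using diagram_arc[OF dB that] by auto
  show "left_part (A \<union> shift_arcs k B) k = A"
    unfolding left_part_def shift_arcs_def using a b by fastforce
  have "{(i, j). (i, j) \<in> A \<union> shift_arcs k B \<and> k < i} = shift_arcs k B"
    unfolding shift_arcs_def using a b by fastforce
  then show "right_part (A \<union> shift_arcs k B) k = B"
    unfolding right_part_def shift_arcs_def by (force simp: image_image)
  show "splits_at (A \<union> shift_arcs k B) k"
    unfolding splits_at_def shift_arcs_def using a b by fastforce
qed

definition first_split :: "(nat \<times> nat) set \<Rightarrow> nat" where
  "first_split C = (LEAST k. 1 \<le> k \<and> splits_at C k)"

lemma first_split_spec:
  assumes "diagram n C" and "1 \<le> n"
  shows "1 \<le> first_split C" "first_split C \<le> n" "splits_at C (first_split C)"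
    and "\<And>k. 1 \<le> k \<Longrightarrow> k < first_split C \<Longrightarrow> \<not> splits_at C k"
proof -
  have ex: "1 \<le> n \<and> splits_at C n" using splits_at_length[OF assms(1)] assms(2) by simp
  show "1 \<le> first_split C" "splits_at C (first_split C)"
    using LeastI[of "\<lambda>k. 1 \<le> k \<and> splits_at C k", OF ex] unfolding first_split_def by auto
  show "first_split C \<le> n"
    using Least_le[of "\<lambda>k. 1 \<le> k \<and> splits_at C k", OF ex] unfolding first_split_def .
  show "\<And>k. 1 \<le> k \<Longrightarrow> k < first_split C \<Longrightarrow> \<not> splits_at C k"
    using not_less_Least[of _ "\<lambda>k. 1 \<le> k \<and> splits_at C k"] unfolding first_split_def by blast
qed

lemma irreducible_left_part_first_split:
  assumes "diagram n C" and "1 \<le> n"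
  shows "irreducible_diagram (first_split C) (left_part C (first_split C))"
  unfolding irreducible_diagram_iff
proof (intro conjI allI impI)
  let ?k = "first_split C"
  show "1 \<le> ?k" using first_split_spec[OF assms] by blast
  fix k' assume k': "1 \<le> k' \<and> k' < ?k"
  then obtain i j where ij: "(i, j) \<in> C" "i \<le> k'" "k' < j"
    using first_split_spec(4)[OF assms, of k'] unfolding splits_at_def by auto
  then have "j \<le> ?k" using first_split_spec(3)[OF assms] k' unfolding splits_at_def by fastforce
  then have "(i, j) \<in> left_part C ?k" using ij by (simp add: left_part_def)
  then show "\<not> splits_at (left_part C ?k) k'" using ij unfolding splits_at_def by auto
qed

lemma first_split_concat:
  assumes dA: "diagram k A" and dB: "diagram m B" and irr: "irreducible_diagram k A"
  shows "first_split (A \<union> shift_arcs k B) = k"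
  unfolding first_split_def
proof (rule Least_equality)
  show "1 \<le> k \<and> splits_at (A \<union> shift_arcs k B) k"
    using concat_parts(3)[OF dA dB] irr irreducible_diagram_iff by blast
  fix y assume y: "1 \<le> y \<and> splits_at (A \<union> shift_arcs k B) y"
  show "k \<le> y"
  proof (rule ccontr)
    assume "\<not> k \<le> y"
    then have "\<not> splits_at A y" using irr y irreducible_diagram_iff by auto
    then show False using y unfolding splits_at_def by auto
  qed
qed

definition decompositions :: "nat \<Rightarrow> nat \<Rightarrow> (nat \<times> nat \<times> (nat \<times> nat) set \<times> (nat \<times> nat) set) set" where
  "decompositions g n = (SIGMA k:{1..n}. SIGMA g1:{0..g}.
     {A. g_structure g1 k A \<and> irreducible_diagram k A} \<times> {B. g_structure (g - g1) (n - k) B})"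

definition glue :: "nat \<times> nat \<times> (nat \<times> nat) set \<times> (nat \<times> nat) set \<Rightarrow> (nat \<times> nat) set" where
  "glue x = (case x of (k, g1, A, B) \<Rightarrow> A \<union> shift_arcs k B)"

lemma inj_on_glue: "inj_on glue (decompositions g n)"
proof (rule inj_onI)
  fix x y assume x: "x \<in> decompositions g n" and y: "y \<in> decompositions g n" and "glue x = glue y"
  obtain k g1 A B where xx: "x = (k, g1, A, B)" by (cases x) auto
  obtain k' g1' A' B' where yy: "y = (k', g1', A', B')" by (cases y) auto
  have h: "diagram k A" "genus A = g1" "irreducible_diagram k A" "diagram (n - k) B"
    using x unfolding xx decompositions_def g_structure_iff by auto
  have h': "diagram k' A'" "genus A' = g1'" "irreducible_diagram k' A'" "diagram (n - k') B'"
    using y unfolding yy decompositions_def g_structure_iff by auto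
  have C: "A \<union> shift_arcs k B = A' \<union> shift_arcs k' B'"
    using \<open>glue x = glue y\<close> unfolding xx yy glue_def by simp
  have "k = k'" using first_split_concat[OF h(1,4,3)] first_split_concat[OF h'(1,4,3)] C by simp
  moreover have "A = A'" "B = B'"
    using concat_parts(1,2)[OF h(1,4)] concat_parts(1,2)[OF h'(1,4)] C \<open>k = k'\<close> by metis+
  ultimately show "x = y" unfolding xx yy using h(2) h'(2) by simp
qed

lemma glue_decompositions:
  assumes "1 \<le> n"
  shows "glue ` decompositions g n = {C. g_structure g n C}"
proof (intro equalityI subsetI)
  fix C assume "C \<in> glue ` decompositions g n"
  then obtain k g1 A B where x: "(k, g1, A, B) \<in> decompositions g n" and C: "C = A \<union> shift_arcs k B"
    unfolding glue_def by auto
  then have "g_structure (g1 + (g - g1)) (k + (n - k)) C"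
    unfolding C decompositions_def by (intro g_structure_concat) auto
  moreover have "g1 + (g - g1) = g" "k + (n - k) = n" using x unfolding decompositions_def by auto
  ultimately show "C \<in> {C. g_structure g n C}" by simp
next
  fix C assume "C \<in> {C. g_structure g n C}"
  then have d: "diagram n C" "genus C = g" "no_unit_arcs C" by (auto simp: g_structure_iff)
  define k where "k = first_split C"
  define A where "A = left_part C k"
  define B where "B = right_part C k"
  have dA: "diagram k A" and dB: "diagram (n - k) B"
    unfolding A_def B_def by (rule diagram_left_part[OF d(1)], rule diagram_right_part[OF d(1)])
  have CC: "C = A \<union> shift_arcs k B"
    unfolding A_def B_def k_def by (rule splits_at_decompose[OF first_split_spec(3)[OF d(1) assms] d(1)])
  have "genus A + genus B = g" using genus_concat[OF dA dB] CC d(2) by simp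
  moreover have "no_unit_arcs A" "no_unit_arcs B"
    unfolding A_def B_def using no_unit_arcs_left_part no_unit_arcs_right_part d(3) by blast+
  moreover have "irreducible_diagram k A" "1 \<le> k" "k \<le> n"
    unfolding A_def k_def using irreducible_left_part_first_split[OF d(1) assms] first_split_spec[OF d(1) assms]
    by blast+
  ultimately have "(k, genus A, A, B) \<in> decompositions g n"
    unfolding decompositions_def g_structure_iff using dA dB by auto
  moreover have "glue (k, genus A, A, B) = C" unfolding glue_def CC by simp
  ultimately show "C \<in> glue ` decompositions g n" by force
qed

lemma finite_g_structures: "finite {A. g_structure g n A}"
  by (rule finite_subset[of _ "Pow ({1..n} \<times> {1..n})"]) (auto simp: g_structure_def diagram_def)

lemma card_decompositions:
  "card (decompositions g n) = (\<Sum>k=1..n. \<Sum>g1=0..g. dstar g1 k * d (g - g1) (n - k))"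
proof -
  have "finite {A. g_structure g1 k A \<and> irreducible_diagram k A}" for g1 k
    using finite_g_structures by (rule finite_subset[rotated]) auto
  then show ?thesis unfolding decompositions_def
    by (simp add: card_SigmaI finite_g_structures card_cartesian_product dstar_def d_def)
qed

lemma d_recurrence:
  "1 \<le> n \<Longrightarrow> d g n = (\<Sum>k=1..n. \<Sum>g1=0..g. dstar g1 k * d (g - g1) (n - k))"
  using bij_betw_same_card[of glue "decompositions g n" "{C. g_structure g n C}"]
    inj_on_glue glue_decompositions card_decompositions
  unfolding d_def bij_betw_def by metis

lemma d_0: "d g 0 = (if g = 0 then 1 else 0)"
proof -
  have "{A. g_structure g 0 A} = (if g = 0 then {{}} else {})"
    unfolding g_structure_def has_genus_def diagram_0_iff by auto
  then show ?thesis unfolding d_def by simp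
qed

lemma dstar_0: "dstar g 0 = 0"
  unfolding dstar_def irreducible_diagram_def by simp

section \<open>Generating functions\<close>

lemma D_recurrence: "D g = (if g = 0 then 1 else 0) + (\<Sum>g1=0..g. Dstar g1 * D (g - g1))"
proof (rule fps_ext)
  fix n
  have coeff: "fps_nth (\<Sum>g1=0..g. Dstar g1 * D (g - g1)) n =
      (\<Sum>i=0..n. \<Sum>g1=0..g. real (dstar g1 i) * real (d (g - g1) (n - i)))"
    by (simp add: fps_sum_nth fps_mult_nth Dstar_def D_def sum.swap[of _ "{0..g}"])
  show "fps_nth (D g) n = fps_nth ((if g = 0 then 1 else 0) + (\<Sum>g1=0..g. Dstar g1 * D (g - g1))) n"
  proof (cases "n = 0")
    case True
    then show ?thesis unfolding fps_add_nth coeff by (simp add: dstar_0 d_0 D_def)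
  next
    case False
    have "(\<Sum>i=0..n. \<Sum>g1=0..g. real (dstar g1 i) * real (d (g - g1) (n - i))) =
        (\<Sum>i=1..n. \<Sum>g1=0..g. real (dstar g1 i) * real (d (g - g1) (n - i)))"
      by (simp add: sum.atLeast_Suc_atMost dstar_0)
    also have "\<dots> = real (d g n)" using d_recurrence[of n g] False by simp
    finally show ?thesis using False coeff by (simp add: D_def)
  qed
qed

lemma fps_eq_divide_of_mult:
  fixes X Y R :: "'a::field fps"
  assumes "fps_nth X 0 \<noteq> 0" and "Y * X = R"
  shows "Y = R / X"
proof -
  have "R / X = Y * X * inverse X" using assms by (simp add: fps_divide_unit)
  also have "\<dots> = Y" using inverse_mult_eq_1'[OF assms(1)] by (simp add: mult.assoc)
  finally show ?thesis ..
qed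

theorem lemma2:
  shows "Dstar 0 = 1 - 1 / D 0 \<and>
    (\<forall>g\<ge>1. Dstar g =
           - (((Dstar 0 - 1) * D g + (\<Sum>g1 = 1..g - 1. Dstar g1 * D (g - g1))) / D 0))"
proof (intro conjI allI impI)
  have D00: "fps_nth (D 0) 0 \<noteq> 0" by (simp add: D_def d_0)
  have "D 0 = 1 + Dstar 0 * D 0" using D_recurrence[of 0] by simp
  then have "D 0 - 1 = (1 + Dstar 0 * D 0) - 1" by (rule arg_cong)
  then have "Dstar 0 * D 0 = D 0 - 1" by simp
  then have "Dstar 0 = (D 0 - 1) / D 0" by (rule fps_eq_divide_of_mult[OF D00])
  also have "\<dots> = 1 - 1 / D 0" using D00 by (simp add: fps_divide_unit algebra_simps inverse_mult_eq_1')
  finally show "Dstar 0 = 1 - 1 / D 0" .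
  fix g :: nat assume "1 \<le> g"
  then obtain h where h: "g = Suc h" by (cases g) auto
  let ?S = "\<Sum>g1 = 1..g - 1. Dstar g1 * D (g - g1)"
  have "(\<Sum>g1=0..g. Dstar g1 * D (g - g1)) = Dstar 0 * D g + ?S + Dstar g * D 0"
    unfolding h by (simp add: sum.atLeast_Suc_atMost)
  then have "Dstar g * D 0 = - ((Dstar 0 - 1) * D g + ?S)"
    using D_recurrence[of g] h by (simp add: algebra_simps)
  then have "Dstar g = - ((Dstar 0 - 1) * D g + ?S) / D 0" by (rule fps_eq_divide_of_mult[OF D00])
  then show "Dstar g = - (((Dstar 0 - 1) * D g + ?S) / D 0)" by (simp add: fps_divide_unit D00 algebra_simps)
qed

end
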